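(* Let $n\ge 1$ and $k\ge 2$ be integers, and let $A\subseteq\mathbb{Z}_{2n}$ with $|A|\ge n+k$. Then $\Sigma_k(A)=\mathbb{Z}_{2n}$.
   Context: For a finite set $A\subseteq\mathbb{Z}_m$ and an integer $1\le k\le |A|$, $\Sigma_k(A)$ (written $A\psi^{k-1}A$ in the paper) denotes the set of all elements of $\mathbb{Z}_m$ that can be written as a sum of $k$ distinct elements of $A$. *)

theory Defs
  imports Main
begin

definition Zmod :: "int \<Rightarrow> int set" where
  "Zmod m = {0..<m}"

definition restricted_sumset :: "int \<Rightarrow> nat \<Rightarrow> int set \<Rightarrow> int set" where
  "restricted_sumset m k A = {(\<Sum>B) mod m | B. B \<subseteq> A \<and> card B = k}"

end

theory Submission
  imports Defs
begin

text \<open>Set aside \<open>k - 2\<close> elements of \<open>A\<close>; it remains to write every residue as a sum of two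
distinct elements of the rest \<open>A'\<close>, which has at least \<open>n + 2\<close> elements. For a target \<open>y\<close>,
the reflection \<open>a \<mapsto> y - a\<close> is an involution of \<open>\<int>\<^sub>2\<^sub>n\<close>, so \<open>A'\<close> and its reflection meet in
at least \<open>2(n + 2) - 2n = 4\<close> points. Each such point \<open>a\<close> gives \<open>a + (y - a) = y\<close> with both
summands in \<open>A'\<close>, and they are distinct unless \<open>2a = y\<close>; but \<open>2a = y\<close> has at most two solutions
in \<open>\<int>\<^sub>2\<^sub>n\<close>, since any two differ by a multiple of \<open>n\<close>.\<close>

lemma card_le_2_if_same_residue:
  fixes m r :: int and S :: "int set"
  assumes "m > 0" and "S \<subseteq> {0..<2 * m}" and "\<And>b. b \<in> S \<Longrightarrow> b mod m = r"
  shows "card S \<le> 2"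
proof -
  have "S \<subseteq> {r, r + m}"
  proof
    fix b assume b: "b \<in> S"
    have "0 \<le> b" "b < 2 * m" using b assms(2) by auto
    have "m * (b div m) \<le> b"
      using mult_div_mod_eq[of m b] pos_mod_sign[OF assms(1), of b] by linarith
    then have "m * (b div m) < m * 2" using \<open>b < 2 * m\<close> by linarith
    then have "b div m < 2" using assms(1) by simp
    moreover have "0 \<le> b div m"
      using \<open>0 \<le> b\<close> assms(1) by (simp add: pos_imp_zdiv_nonneg_iff)
    ultimately have "b div m \<in> {0, 1}" by auto
    moreover have "b = m * (b div m) + r"
      using assms(3)[OF b] mult_div_mod_eq[of m b] by simp
    ultimately show "b \<in> {r, r + m}" by auto
  qed
  then show ?thesis
    using card_mono[of "{r, r + m}" S] card_insert_le_m1[of 2 "{r + m}" r] by simp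
qed

lemma card_solutions_twice_eq_mod_double_le_2:
  fixes m y :: int
  assumes "m > 0"
  shows "card {a \<in> {0..<2 * m}. (2 * a) mod (2 * m) = y mod (2 * m)} \<le> 2"
    (is "card ?S \<le> 2")
proof (cases "?S = {}")
  case False
  then obtain a0 where a0: "a0 \<in> ?S" by blast
  have "b mod m = a0 mod m" if "b \<in> ?S" for b
    using that a0 by auto
  then show ?thesis
    using card_le_2_if_same_residue[OF assms, of ?S "a0 mod m"] by blast
next
  case True
  then show ?thesis by (simp only: card.empty zero_le_numeral)
qed

lemma exists_distinct_pair_sum_mod_double:
  fixes m :: nat and y :: int and A :: "int set"
  assumes A: "A \<subseteq> {0..<2 * int m}" and card_A: "card A \<ge> m + 2"
  shows "\<exists>a\<in>A. \<exists>b\<in>A. a \<noteq> b \<and> (a + b) mod (2 * int m) = y mod (2 * int m)"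
proof (rule ccontr)
  define N where "N = 2 * int m"
  define f where "f a = (y - a) mod N" for a
  assume "\<not> ?thesis"
  then have no_pair: "a = b" if "a \<in> A" "b \<in> A" "(a + b) mod N = y mod N" for a b
    using that by (auto simp: N_def)
  have A_N: "A \<subseteq> {0..<N}" using A by (simp add: N_def)
  have "m > 0"
  proof (rule ccontr)
    assume "\<not> m > 0"
    then have "A = {}" using A by auto
    then show False using card_A by simp
  qed
  then have N_pos: "N > 0" by (simp add: N_def)
  have finite_A: "finite A" using A_N finite_subset by blast
  have ff: "f (f a) = a" if "a \<in> {0..<N}" for a
    using that by (simp add: f_def mod_diff_right_eq)
  have "inj_on f A"
    by (rule inj_on_inverseI[where g = f]) (use A_N ff in blast)
  then have card_fA: "card (f ` A) = card A" by (rule card_image)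
  have "A \<union> f ` A \<subseteq> {0..<N}"
    using A_N N_pos by (auto simp: f_def)
  then have "card (A \<union> f ` A) \<le> card {0..<N}"
    by (rule card_mono[OF finite_atLeastLessThan_int])
  then have "card (A \<union> f ` A) \<le> 2 * m"
    by (simp add: N_def)
  moreover have "card A + card (f ` A) = card (A \<union> f ` A) + card (A \<inter> f ` A)"
    using finite_A by (intro card_Un_Int) simp_all
  ultimately have "card (A \<inter> f ` A) \<ge> 4"
    using card_A card_fA by linarith
  moreover have "A \<inter> f ` A \<subseteq> {a \<in> {0..<N}. (2 * a) mod N = y mod N}"
  proof
    fix a assume a: "a \<in> A \<inter> f ` A"
    then obtain b where b: "b \<in> A" "a = f b" by blast
    have "(a + f a) mod N = y mod N"
      by (simp add: f_def mod_add_right_eq)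
    moreover have "f a \<in> A" using b ff A_N by auto
    ultimately have "f a = a" using a no_pair[of a "f a"] by auto
    then have "(2 * a) mod N = y mod N"
      using \<open>(a + f a) mod N = y mod N\<close> by simp
    then show "a \<in> {a \<in> {0..<N}. (2 * a) mod N = y mod N}"
      using a A_N by auto
  qed
  then have "card (A \<inter> f ` A) \<le> card {a \<in> {0..<N}. (2 * a) mod N = y mod N}"
    by (rule card_mono[rotated]) (rule finite_subset[OF _ finite_atLeastLessThan_int], blast)
  also have "\<dots> \<le> 2"
    using card_solutions_twice_eq_mod_double_le_2[of "int m" y] \<open>m > 0\<close> by (simp add: N_def)
  finally show False using \<open>card (A \<inter> f ` A) \<ge> 4\<close> by simp
qed

lemma exists_subset_sum_mod_double:
  fixes m k :: nat and x :: int and A :: "int set"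
  assumes A: "A \<subseteq> {0..<2 * int m}" and "k \<ge> 2" and card_A: "card A \<ge> m + k"
  shows "\<exists>B\<subseteq>A. card B = k \<and> (\<Sum>B) mod (2 * int m) = x mod (2 * int m)"
proof -
  have finite_A: "finite A" using A finite_subset by blast
  have "k - 2 \<le> card A" using card_A by simp
  then obtain C where C: "C \<subseteq> A" "card C = k - 2"
    by (rule obtain_subset_with_card_n) blast
  have finite_C: "finite C" using C finite_A finite_subset by blast
  have "card (A - C) \<ge> m + 2"
    using C card_A \<open>k \<ge> 2\<close> card_Diff_subset[OF finite_C C(1)] by simp
  then obtain a b where ab: "a \<in> A - C" "b \<in> A - C" "a \<noteq> b"
    and sum_ab: "(a + b) mod (2 * int m) = (x - \<Sum>C) mod (2 * int m)"
    using exists_distinct_pair_sum_mod_double[of "A - C" m "x - \<Sum>C"] A by blast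
  define B where "B = insert a (insert b C)"
  have "card B = k"
    using ab C \<open>k \<ge> 2\<close> finite_C by (simp add: B_def)
  moreover have "(\<Sum>B) mod (2 * int m) = x mod (2 * int m)"
  proof -
    have "\<Sum>B = (a + b) + \<Sum>C"
      using ab finite_C by (simp add: B_def)
    then show ?thesis
      using sum_ab by (metis diff_add_cancel mod_add_left_eq)
  qed
  moreover have "B \<subseteq> A" using ab C by (auto simp: B_def)
  ultimately show ?thesis by blast
qed

theorem mainTheorem10:
  fixes n k :: nat and A :: "int set"
  assumes "n \<ge> 1" and "k \<ge> 2"
    and "A \<subseteq> Zmod (2 * int n)"
    and "card A \<ge> n + k"
  shows "restricted_sumset (2 * int n) k A = Zmod (2 * int n)"
proof
  show "restricted_sumset (2 * int n) k A \<subseteq> Zmod (2 * int n)"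
    using assms(1) by (auto simp: restricted_sumset_def Zmod_def)
  show "Zmod (2 * int n) \<subseteq> restricted_sumset (2 * int n) k A"
  proof
    fix x assume x: "x \<in> Zmod (2 * int n)"
    obtain B where "B \<subseteq> A" "card B = k" "(\<Sum>B) mod (2 * int n) = x mod (2 * int n)"
      using exists_subset_sum_mod_double[of A n k x] assms(2-4) by (auto simp: Zmod_def)
    moreover have "x mod (2 * int n) = x" using x by (simp add: Zmod_def)
    ultimately show "x \<in> restricted_sumset (2 * int n) k A"
      unfolding restricted_sumset_def by auto
  qed
qed

end
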